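(* Let $G$ be a multiplicatively written Abelian group, $\phi$ a height on $G$, $\alpha\in G$, and $0\le a<b\le\infty$. Then $(a,b)$ is uniform if and only if every point $t\in(a,b)$ is contained in some open interval $J\subseteq(a,b)$ which is uniform.
   Context: A height on $G$ is a map $\phi:G\to[0,\infty)$ with $\phi(e)=0$ and $\phi(\beta)=\phi(\beta^{-1})$. $\mathbb R^\infty$ is the set of finitely supported real sequences, $\|\mathbf x\|_t=(\sum_n|x_n|^t)^{1/t}$. $\phi_t(\alpha)=\inf\{(\sum_{n=1}^N\phi(\alpha_n)^t)^{1/t}:N\in\mathbb N,\ \alpha_n\in G,\ \alpha=\prod_{n=1}^N\alpha_n\}$. A set $K\subseteq(0,\infty)$ is uniform if there exists $\mathbf x\in\mathbb R^\infty$ with $\phi_t(\alpha)=\|\mathbf x\|_t$ for all $t\in K$. *)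

theory Defs
  imports "HOL-Analysis.Analysis"
begin

text \<open>Abelian group G: a type of class ab_group_add (group operation written additively,
  identity 0, inverse uminus). A height: nonnegative, zero at identity, symmetric.\<close>

definition is_height :: "('a::ab_group_add \<Rightarrow> real) \<Rightarrow> bool" where
  "is_height phi \<longleftrightarrow> phi 0 = 0 \<and> (\<forall>x. 0 \<le> phi x) \<and> (\<forall>x. phi x = phi (- x))"

definition phi_t :: "('a::ab_group_add \<Rightarrow> real) \<Rightarrow> real \<Rightarrow> 'a \<Rightarrow> real" where
  "phi_t phi t alpha = Inf {(\<Sum>x\<leftarrow>xs. phi x powr t) powr (1 / t) | xs. xs \<noteq> [] \<and> sum_list xs = alpha}"

definition fin_supp :: "(nat \<Rightarrow> real) \<Rightarrow> bool" where
  "fin_supp x \<longleftrightarrow> finite {n. x n \<noteq> 0}"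

definition tnorm :: "real \<Rightarrow> (nat \<Rightarrow> real) \<Rightarrow> real" where
  "tnorm t x = (\<Sum>n\<in>{n. x n \<noteq> 0}. \<bar>x n\<bar> powr t) powr (1 / t)"

definition uniform :: "('a::ab_group_add \<Rightarrow> real) \<Rightarrow> 'a \<Rightarrow> real set \<Rightarrow> bool" where
  "uniform phi alpha K \<longleftrightarrow> (\<exists>x. fin_supp x \<and> (\<forall>t\<in>K. phi_t phi t alpha = tnorm t x))"

definition ointv :: "ereal \<Rightarrow> ereal \<Rightarrow> real set" where
  "ointv a b = {t. a < ereal t \<and> ereal t < b}"

end

theory Submission
  imports Defs
begin

text \<open>For finitely supported \<open>x\<close>, \<open>\<Sum>n |x n| powr t = \<Sum>l k\<^sub>l e\<^sup>l\<^sup>t\<close> with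
  \<open>l\<close> ranging over the values \<open>ln |x n|\<close>, an exponential polynomial in \<open>t\<close>. Distinct
  exponentials are linearly independent on every open interval, so \<open>t \<mapsto> tnorm t x\<close> on
  \<open>(0,\<infinity>)\<close> is determined by its values near any single point. Two local representations of
  \<open>phi_t phi t alpha\<close> that overlap therefore agree everywhere, and connectedness of
  \<open>(a,b)\<close> glues the local representations into one.\<close>

lemma exp_sum_vanishing_on_interval_imp_coeffs_zero:
  fixes c :: "real \<Rightarrow> real"
  assumes "finite L" "u < v" "\<And>t. t \<in> {u<..<v} \<Longrightarrow> (\<Sum>l\<in>L. c l * exp (l * t)) = 0"
  shows "\<forall>l\<in>L. c l = 0"
  using assms
proof (induction L arbitrary: c rule: finite_induct)
  case empty
  then show ?case by simp
next
  case (insert m L)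
  txt \<open>Dividing by \<open>e\<^sup>m\<^sup>t\<close> makes the \<open>m\<close>-term constant; differentiating removes it.\<close>
  define g where "g t = (\<Sum>l\<in>L. c l * exp ((l - m) * t))" for t
  have exp_shift: "exp (l * t) * exp (- (m * t)) = exp ((l - m) * t)" for l t
    by (simp add: exp_add [symmetric] algebra_simps)
  have g_const: "g t = - c m" if "t \<in> {u<..<v}" for t
  proof -
    have "0 = (\<Sum>l\<in>insert m L. c l * exp (l * t)) * exp (- (m * t))"
      using insert.prems(2) that by simp
    also have "\<dots> = (\<Sum>l\<in>insert m L. c l * (exp (l * t) * exp (- (m * t))))"
      by (simp add: sum_distrib_right mult.assoc)
    also have "\<dots> = c m + g t"
      using insert.hyps by (simp only: sum.insert exp_shift g_def) simp
    finally show ?thesis by simp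
  qed
  have "(\<Sum>l\<in>L. (c l * (l - m)) * exp (l * t)) = 0" if t: "t \<in> {u<..<v}" for t
  proof -
    have "(g has_real_derivative (\<Sum>l\<in>L. c l * ((l - m) * exp ((l - m) * t)))) (at t)"
      unfolding g_def by (auto intro!: derivative_eq_intros simp: algebra_simps)
    moreover have "(g has_real_derivative 0) (at t)"
      by (rule has_field_derivative_transform_within_open [of "\<lambda>_. - c m" _ _ "{u<..<v}"])
         (use t g_const in auto)
    ultimately have "(\<Sum>l\<in>L. c l * ((l - m) * exp ((l - m) * t))) = 0"
      by (rule DERIV_unique)
    then have "(\<Sum>l\<in>L. c l * ((l - m) * exp ((l - m) * t))) * exp (m * t) = 0"
      by simp
    moreover have "exp ((l - m) * t) * exp (m * t) = exp (l * t)" for l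
      by (simp add: exp_add [symmetric] algebra_simps)
    ultimately show ?thesis
      by (simp add: sum_distrib_right mult.assoc mult.left_commute)
  qed
  then have "\<forall>l\<in>L. c l * (l - m) = 0"
    using insert.IH [of "\<lambda>l. c l * (l - m)"] insert.prems(1) by blast
  then have coeffs_L: "\<forall>l\<in>L. c l = 0"
    using insert.hyps(2) by auto
  then have "c m = 0"
    using g_const [of "(u + v) / 2"] insert.prems(1) by (simp add: g_def)
  with coeffs_L show ?case by simp
qed

definition power_sum :: "real \<Rightarrow> (nat \<Rightarrow> real) \<Rightarrow> real" where
  "power_sum t x = (\<Sum>n\<in>{n. x n \<noteq> 0}. \<bar>x n\<bar> powr t)"

lemma tnorm_eq_power_sum_powr: "tnorm t x = power_sum t x powr (1 / t)"
  by (simp add: tnorm_def power_sum_def)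

lemma power_sum_eq_exp_sum:
  assumes "fin_supp x" "finite L" "(\<lambda>n. ln \<bar>x n\<bar>) ` {n. x n \<noteq> 0} \<subseteq> L"
  shows "power_sum t x = (\<Sum>l\<in>L. real (card {n. x n \<noteq> 0 \<and> ln \<bar>x n\<bar> = l}) * exp (l * t))"
proof -
  let ?S = "{n. x n \<noteq> 0}" and ?g = "\<lambda>n. ln \<bar>x n\<bar>"
  have "finite ?S"
    using assms(1) by (simp add: fin_supp_def)
  have "power_sum t x = (\<Sum>n\<in>?S. exp (?g n * t))"
    unfolding power_sum_def by (rule sum.cong) (auto simp: powr_def mult.commute)
  also have "\<dots> = (\<Sum>l\<in>?g ` ?S. \<Sum>n\<in>{n\<in>?S. ?g n = l}. exp (?g n * t))"
    using \<open>finite ?S\<close> by (rule sum.image_gen)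
  also have "\<dots> = (\<Sum>l\<in>?g ` ?S. real (card {n. x n \<noteq> 0 \<and> ln \<bar>x n\<bar> = l}) * exp (l * t))"
    by (rule sum.cong) auto
  also have "\<dots> = (\<Sum>l\<in>L. real (card {n. x n \<noteq> 0 \<and> ln \<bar>x n\<bar> = l}) * exp (l * t))"
    by (rule sum.mono_neutral_left [OF assms(2,3)]) (auto simp: image_iff card_eq_0_iff)
  finally show ?thesis .
qed

lemma power_sum_eq_on_interval_imp_eq:
  assumes "fin_supp x" "fin_supp y" "u < v"
    and "\<And>t. t \<in> {u<..<v} \<Longrightarrow> power_sum t x = power_sum t y"
  shows "power_sum s x = power_sum s y"
proof -
  define L where "L = (\<lambda>n. ln \<bar>x n\<bar>) ` {n. x n \<noteq> 0} \<union> (\<lambda>n. ln \<bar>y n\<bar>) ` {n. y n \<noteq> 0}"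
  have "finite L"
    using assms(1,2) by (simp add: L_def fin_supp_def)
  define c where "c l = real (card {n. x n \<noteq> 0 \<and> ln \<bar>x n\<bar> = l})
    - real (card {n. y n \<noteq> 0 \<and> ln \<bar>y n\<bar> = l})" for l
  have diff: "power_sum t x - power_sum t y = (\<Sum>l\<in>L. c l * exp (l * t))" for t
    using power_sum_eq_exp_sum [OF assms(1) \<open>finite L\<close>, of t]
      power_sum_eq_exp_sum [OF assms(2) \<open>finite L\<close>, of t]
    by (simp add: L_def c_def sum_subtractf left_diff_distrib)
  have "\<forall>l\<in>L. c l = 0"
    by (rule exp_sum_vanishing_on_interval_imp_coeffs_zero [OF \<open>finite L\<close> assms(3)])
       (simp add: assms(4) flip: diff)
  then show ?thesis
    using diff [of s] by simp
qed

lemma tnorm_eq_imp_power_sum_eq: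
  assumes "0 < t" "tnorm t x = tnorm t y"
  shows "power_sum t x = power_sum t y"
proof -
  have "power_sum t z = tnorm t z powr t" for z
    using \<open>0 < t\<close> by (simp add: tnorm_eq_power_sum_powr powr_powr power_sum_def sum_nonneg)
  with assms(2) show ?thesis by simp
qed

lemma tnorm_eq_near_imp_eq:
  assumes "fin_supp x" "fin_supp y" "0 < t" "\<forall>\<^sub>F s in nhds t. tnorm s x = tnorm s y"
  shows "tnorm s x = tnorm s y"
proof -
  obtain d where "0 < d" and d: "\<And>s. dist s t < d \<Longrightarrow> tnorm s x = tnorm s y"
    using assms(4) by (auto simp: eventually_nhds_metric)
  define e where "e = min d t"
  have "power_sum s x = power_sum s y"
  proof (rule power_sum_eq_on_interval_imp_eq [OF assms(1,2)])
    show "t - e < t + e"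
      using \<open>0 < d\<close> \<open>0 < t\<close> by (simp add: e_def min_def)
    show "power_sum r x = power_sum r y" if "r \<in> {t - e<..<t + e}" for r
      using that d [of r] by (intro tnorm_eq_imp_power_sum_eq) (auto simp: e_def dist_real_def)
  qed
  then show ?thesis
    by (simp add: tnorm_eq_power_sum_powr)
qed

lemma connected_ointv: "connected (ointv c d)"
proof (rule is_interval_connected)
  show "is_interval (ointv c d)"
  proof (unfold is_interval_1, intro ballI allI impI)
    fix r s t assume "r \<in> ointv c d" "s \<in> ointv c d" "r \<le> t \<and> t \<le> s"
    then have "c < ereal r" "ereal r \<le> ereal t" "ereal t \<le> ereal s" "ereal s < d"
      by (auto simp: ointv_def)
    then show "t \<in> ointv c d"
      unfolding ointv_def using less_le_trans le_less_trans by blast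
  qed
qed

lemma open_ointv: "open (ointv c d)"
proof -
  have "ointv c d = ereal -` {c<..<d}"
    by (auto simp: ointv_def)
  then show ?thesis
    by (simp add: open_ereal_vimage)
qed

lemma tnorm_representation_local_imp_global:
  fixes f :: "real \<Rightarrow> real" and I :: "real set"
  assumes "connected I" "I \<subseteq> {0<..}"
    and local: "\<And>t. t \<in> I \<Longrightarrow> \<exists>x. fin_supp x \<and> (\<forall>\<^sub>F s in nhds t. f s = tnorm s x)"
  shows "\<exists>x. fin_supp x \<and> (\<forall>t\<in>I. f t = tnorm t x)"
proof (cases "I = {}")
  case True
  have "fin_supp (\<lambda>_. 0)"
    by (simp add: fin_supp_def)
  with True show ?thesis by blast
next
  case False
  then obtain t0 where "t0 \<in> I" by blast
  then obtain x0 where x0: "fin_supp x0" "\<forall>\<^sub>F s in nhds t0. f s = tnorm s x0"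
    using local by blast
  have agree: "tnorm r x = tnorm r y"
    if "fin_supp x" "fin_supp y" "t \<in> I"
      "\<forall>\<^sub>F s in nhds t. f s = tnorm s x" "\<forall>\<^sub>F s in nhds t. f s = tnorm s y" for x y t r
  proof (rule tnorm_eq_near_imp_eq)
    show "0 < t"
      using \<open>t \<in> I\<close> assms(2) by auto
    show "\<forall>\<^sub>F s in nhds t. tnorm s x = tnorm s y"
      using that(4,5) by eventually_elim simp
  qed fact+
  define R where "R s t \<longleftrightarrow> (\<exists>x. fin_supp x \<and>
    (\<forall>\<^sub>F r in nhds s. f r = tnorm r x) \<and> (\<forall>\<^sub>F r in nhds t. f r = tnorm r x))" for s t
  have R_t0: "R t0 t" if "t \<in> I" for t
  proof (rule connected_equivalence_relation [OF assms(1) \<open>t0 \<in> I\<close> that])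
    show "R s t" if "R t s" for s t
      using that unfolding R_def by blast
    show "R r t" if "R r s" "R s t" "s \<in> I" for r s t
    proof -
      obtain x where x: "fin_supp x" "\<forall>\<^sub>F q in nhds r. f q = tnorm q x"
          "\<forall>\<^sub>F q in nhds s. f q = tnorm q x"
        using \<open>R r s\<close> unfolding R_def by blast
      obtain y where y: "fin_supp y" "\<forall>\<^sub>F q in nhds s. f q = tnorm q y"
          "\<forall>\<^sub>F q in nhds t. f q = tnorm q y"
        using \<open>R s t\<close> unfolding R_def by blast
      have "tnorm q x = tnorm q y" for q
        using agree [OF x(1) y(1) \<open>s \<in> I\<close> x(3) y(2)] .
      with x(1,2) y(3) show ?thesis
        unfolding R_def by (intro exI [of _ x]) simp
    qed
    show "\<exists>T. openin (top_of_set I) T \<and> s \<in> T \<and> (\<forall>t\<in>T. R s t)" if "s \<in> I" for s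
    proof -
      obtain x where "fin_supp x" and near_s: "\<forall>\<^sub>F r in nhds s. f r = tnorm r x"
        using local \<open>s \<in> I\<close> by blast
      then have "\<forall>\<^sub>F r in nhds s. \<forall>\<^sub>F q in nhds r. f q = tnorm q x"
        by (simp only: eventually_eventually)
      then obtain T where "open T" "s \<in> T" "\<forall>r\<in>T. \<forall>\<^sub>F q in nhds r. f q = tnorm q x"
        unfolding eventually_nhds [of _ s] by blast
      with \<open>fin_supp x\<close> near_s \<open>s \<in> I\<close> show ?thesis
        unfolding R_def by (intro exI [of _ "I \<inter> T"]) blast
    qed
  qed
  have "f t = tnorm t x0" if t: "t \<in> I" for t
  proof -
    obtain x where x: "fin_supp x" "\<forall>\<^sub>F r in nhds t0. f r = tnorm r x"
        "\<forall>\<^sub>F r in nhds t. f r = tnorm r x"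
      using R_t0 [OF t] unfolding R_def by blast
    have "f t = tnorm t x"
      using x(3) by (rule eventually_nhds_x_imp_x)
    also have "\<dots> = tnorm t x0"
      by (rule agree [OF x(1) x0(1) \<open>t0 \<in> I\<close> x(2) x0(2)])
    finally show ?thesis .
  qed
  with x0(1) show ?thesis by blast
qed

theorem lemma3p3:
  fixes phi :: "'a::ab_group_add \<Rightarrow> real" and alpha :: 'a and a :: real and b :: ereal
  assumes "is_height phi" and "0 \<le> a" and "ereal a < b"
  shows "uniform phi alpha (ointv (ereal a) b) \<longleftrightarrow>
    (\<forall>t\<in>ointv (ereal a) b. \<exists>c d. t \<in> ointv c d \<and> ointv c d \<subseteq> ointv (ereal a) b
        \<and> uniform phi alpha (ointv c d))"
proof
  assume "uniform phi alpha (ointv (ereal a) b)"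
  then show "\<forall>t\<in>ointv (ereal a) b. \<exists>c d. t \<in> ointv c d \<and> ointv c d \<subseteq> ointv (ereal a) b
      \<and> uniform phi alpha (ointv c d)"
    by blast
next
  assume local: "\<forall>t\<in>ointv (ereal a) b. \<exists>c d. t \<in> ointv c d \<and> ointv c d \<subseteq> ointv (ereal a) b
      \<and> uniform phi alpha (ointv c d)"
  have "\<exists>x. fin_supp x \<and> (\<forall>\<^sub>F s in nhds t. phi_t phi s alpha = tnorm s x)"
    if t: "t \<in> ointv (ereal a) b" for t
  proof -
    obtain c d x where "t \<in> ointv c d" "fin_supp x" "\<forall>s\<in>ointv c d. phi_t phi s alpha = tnorm s x"
      using local t unfolding uniform_def by blast
    then show ?thesis
      using eventually_nhds_in_open [OF open_ointv] by (blast intro: eventually_mono)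
  qed
  moreover have "ointv (ereal a) b \<subseteq> {0<..}"
    using \<open>0 \<le> a\<close> by (auto simp: ointv_def)
  ultimately show "uniform phi alpha (ointv (ereal a) b)"
    unfolding uniform_def by (intro tnorm_representation_local_imp_global connected_ointv) auto
qed

end
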